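(* Let $n\ge2$. For a polar $n$-complex number $u=x_0+h_1x_1+\cdots+h_{n-1}x_{n-1}$ let $\nu(u)=\det A$, where $A$ is the $n\times n$ matrix with entries $A_{ij}=x_{(i-j)\bmod n}$, $i,j=0,\dots,n-1$. Then $$\nu(u)=\prod_{k=0}^{n-1}\big(x_0+\epsilon_kx_1+\epsilon_k^2x_2+\cdots+\epsilon_k^{n-1}x_{n-1}\big),\quad \epsilon_k=e^{2\pi i k/n},$$ so that $\nu(u)=v_+v_-\prod_{k=1}^{n/2-1}(v_k^2+\tilde v_k^2)$ for even $n$ and $\nu(u)=v_+\prod_{k=1}^{(n-1)/2}(v_k^2+\tilde v_k^2)$ for odd $n$. Moreover, for any two polar $n$-complex numbers $u',u''$ with product $u=u'u''$: $v_+=v_+'v_+''$; $v_-=v_-'v_-''$ (for even $n$); $v_k=v_k'v_k''-\tilde v_k'\tilde v_k''$ and $\tilde v_k=v_k'\tilde v_k''+\tilde v_k'v_k''$ for $k=1,\dots,\lfloor (n-1)/2\rfloor$; hence $\rho_k=\rho_k'\rho_k''$, $\nu(u)=\nu(u')\nu(u'')$, and if $\nu(u'),\nu(u'')>0$ then the amplitudes satisfy $\rho=\rho'\rho''$. If furthermore $\rho_k',\rho_k''>0$ then $\phi_k\equiv\phi_k'+\phi_k''\pmod{2\pi}$; if $v_+',v_+''\neq0$ then $\tan\theta_+=\frac{1}{\sqrt2}\tan\theta_+'\tan\theta_+''$; for even $n$, if $v_-',v_-''\ne0$ then $\tan\theta_-=\frac{1}{\sqrt2}\tan\theta_-'\tan\theta_-''$;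 and if $\rho_{k}',\rho_{k}''>0$ then $\tan\psi_{k-1}=\tan\psi_{k-1}'\tan\psi_{k-1}''$ for $k=2,\dots,\lfloor(n-1)/2\rfloor$. (Primed/double-primed quantities refer to $u'$, $u''$, unprimed ones to $u$.)
   Context: Polar $n$-complex numbers: $u=x_0+h_1x_1+\cdots+h_{n-1}x_{n-1}$, $x_j\in\mathbb{R}$, $h_0=1$, with componentwise addition and bilinear multiplication $h_jh_k=h_{(j+k)\bmod n}$. Canonical variables: $v_+=\sum_{p=0}^{n-1}x_p$; for even $n$, $v_-=\sum_{p=0}^{n-1}(-1)^px_p$; for $k=1,\dots,\lfloor(n-1)/2\rfloor$, $v_k=\sum_p x_p\cos(2\pi kp/n)$, $\tilde v_k=\sum_p x_p\sin(2\pi kp/n)$, $\rho_k=\sqrt{v_k^2+\tilde v_k^2}$; when $\rho_k>0$ the azimuthal angle $\phi_k\in[0,2\pi)$ is defined by $\cos\phi_k=v_k/\rho_k$, $\sin\phi_k=\tilde v_k/\rho_k$. Polar angles: $\tan\theta_+=\sqrt2\rho_1/v_+$, and for even $n$, $\tan\theta_-=\sqrt2\rho_1/v_-$. Planar angles: $\tan\psi_{k-1}=\rho_1/\rho_k$ for $k=2,\dots,\lfloor(n-1)/2\rfloor$. Amplitude: if $\nu(u)>0$, $\rho=\nu(u)^{1/n}$. *)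

theory Defs
  imports Complex_Main "Jordan_Normal_Form.Determinant"
begin

text \<open>A polar n-complex number u = x_0 + h_1 x_1 + ... + h_(n-1) x_(n-1) is represented
  by its coefficient function x :: nat => real; only the values at indices p < n matter.\<close>

definition pmul :: "nat \<Rightarrow> (nat \<Rightarrow> real) \<Rightarrow> (nat \<Rightarrow> real) \<Rightarrow> (nat \<Rightarrow> real)" where
  "pmul n x y = (\<lambda>m. \<Sum>j<n. \<Sum>k<n. if (j + k) mod n = m then x j * y k else 0)"

definition nu :: "nat \<Rightarrow> (nat \<Rightarrow> real) \<Rightarrow> real" where
  "nu n x = det (mat n n (\<lambda>(i, j). x ((i + n - j) mod n)))"

definition vplus :: "nat \<Rightarrow> (nat \<Rightarrow> real) \<Rightarrow> real" where
  "vplus n x = (\<Sum>p<n. x p)"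

definition vminus :: "nat \<Rightarrow> (nat \<Rightarrow> real) \<Rightarrow> real" where
  "vminus n x = (\<Sum>p<n. (-1) ^ p * x p)"

definition vk :: "nat \<Rightarrow> nat \<Rightarrow> (nat \<Rightarrow> real) \<Rightarrow> real" where
  "vk n k x = (\<Sum>p<n. x p * cos (2 * pi * real k * real p / real n))"

definition vtk :: "nat \<Rightarrow> nat \<Rightarrow> (nat \<Rightarrow> real) \<Rightarrow> real" where
  "vtk n k x = (\<Sum>p<n. x p * sin (2 * pi * real k * real p / real n))"

definition rhok :: "nat \<Rightarrow> nat \<Rightarrow> (nat \<Rightarrow> real) \<Rightarrow> real" where
  "rhok n k x = sqrt ((vk n k x)\<^sup>2 + (vtk n k x)\<^sup>2)"

text \<open>Azimuthal angle phi_k in [0, 2 pi), meaningful when rho_k > 0.\<close>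
definition phik :: "nat \<Rightarrow> nat \<Rightarrow> (nat \<Rightarrow> real) \<Rightarrow> real" where
  "phik n k x = (THE \<phi>. 0 \<le> \<phi> \<and> \<phi> < 2 * pi \<and>
      cos \<phi> = vk n k x / rhok n k x \<and> sin \<phi> = vtk n k x / rhok n k x)"

definition tan_theta_plus :: "nat \<Rightarrow> (nat \<Rightarrow> real) \<Rightarrow> real" where
  "tan_theta_plus n x = sqrt 2 * rhok n 1 x / vplus n x"

definition tan_theta_minus :: "nat \<Rightarrow> (nat \<Rightarrow> real) \<Rightarrow> real" where
  "tan_theta_minus n x = sqrt 2 * rhok n 1 x / vminus n x"

definition tan_psi :: "nat \<Rightarrow> nat \<Rightarrow> (nat \<Rightarrow> real) \<Rightarrow> real" where
  "tan_psi n k x = rhok n 1 x / rhok n k x"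

definition amplitude :: "nat \<Rightarrow> (nat \<Rightarrow> real) \<Rightarrow> real" where
  "amplitude n x = root n (nu n x)"

end

theory Submission
  imports Defs
begin

(* The matrix A defining nu is circulant, and the Fourier matrix F = (eps^(-jk)) diagonalises
   every circulant matrix: A F = F diag(lambda_0, ..., lambda_(n-1)) with
   lambda_k = sum_p eps^(kp) x_p, eps = e^(2 pi i/n), while F conj(F) = n I shows that F is
   invertible. Hence nu(u) = prod_k lambda_k. For real coefficients lambda_0 = v_+,
   lambda_(n/2) = v_-, lambda_k = v_k + i tilde(v)_k and lambda_(n-k) = conj(lambda_k), which pairs
   the factors into v_k^2 + tilde(v)_k^2. Multiplication of polar n-complex numbers is cyclic
   convolution of the coefficients, which the Fourier transform turns into the pointwise product
   lambda_k(u'u'') = lambda_k(u') lambda_k(u''); every remaining identity is the modulus or the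
   argument of this product of complex numbers. *)

section \<open>Roots of unity\<close>

text \<open>Exponents are integers so that they can be reduced modulo n by congruence arguments.\<close>
definition unit_root :: "nat \<Rightarrow> int \<Rightarrow> complex" where
  "unit_root n a = cis (2 * pi * of_int a / real n)"

lemma unit_root_add: "unit_root n (a + b) = unit_root n a * unit_root n b"
  by (simp add: unit_root_def cis_mult add_divide_distrib distrib_left)

lemma unit_root_power: "unit_root n a ^ k = unit_root n (a * int k)"
  by (simp add: unit_root_def DeMoivre mult_ac)

lemma cnj_unit_root: "cnj (unit_root n a) = unit_root n (- a)"
  by (simp add: unit_root_def cis_cnj)

lemma unit_root_eq_1_iff:
  assumes "n > 0"
  shows "unit_root n a = 1 \<longleftrightarrow> int n dvd a"
proof -
  have "unit_root n a = 1 \<longleftrightarrow>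
      sin (2 * pi * of_int a / real n) = sin 0 \<and> cos (2 * pi * of_int a / real n) = cos 0"
    by (auto simp: unit_root_def complex_eq_iff)
  also have "\<dots> \<longleftrightarrow> (\<exists>m::int. 2 * pi * of_int a / real n = 2 * pi * of_int m)"
    by (simp only: sin_cos_eq_iff add_0)
  also have "\<dots> \<longleftrightarrow> (\<exists>m. a = int n * m)"
    using assms by (simp add: field_simps) (metis of_int_eq_iff of_int_mult of_int_of_nat_eq)
  finally show ?thesis by (simp add: dvd_def)
qed

lemma unit_root_cong:
  assumes "n > 0" and "int n dvd a - b"
  shows "unit_root n a = unit_root n b"
proof -
  have "unit_root n a = unit_root n b * unit_root n (a - b)"
    by (simp flip: unit_root_add)
  with assms show ?thesis by (simp add: unit_root_eq_1_iff)
qed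

lemma sum_unit_root_powers:
  assumes "n > 0"
  shows "(\<Sum>k<n. unit_root n a ^ k) = (if int n dvd a then of_nat n else 0)"
proof (cases "int n dvd a")
  case True
  then have "unit_root n a = 1" using assms by (simp add: unit_root_eq_1_iff)
  then show ?thesis using True by simp
next
  case False
  have "unit_root n a ^ n = 1"
    using assms by (simp add: unit_root_power unit_root_eq_1_iff)
  then show ?thesis using False assms by (simp add: geometric_sum unit_root_eq_1_iff)
qed

section \<open>The discrete Fourier transform\<close>

definition dft :: "nat \<Rightarrow> (nat \<Rightarrow> complex) \<Rightarrow> nat \<Rightarrow> complex" where
  "dft n c k = (\<Sum>p<n. unit_root n (int k * int p) * c p)"

lemma cis_power_eq_unit_root: "cis (2 * pi * real k / real n) ^ p = unit_root n (int k * int p)"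
  by (simp add: unit_root_def DeMoivre mult_ac)

lemma dft_of_real_eq_Complex: "dft n (of_real \<circ> u) k = Complex (vk n k u) (vtk n k u)"
  by (simp add: complex_eq_iff dft_def vk_def vtk_def Re_sum Im_sum unit_root_def mult_ac)

lemma rhok_eq_norm_dft: "rhok n k u = cmod (dft n (of_real \<circ> u) k)"
  by (simp add: rhok_def dft_of_real_eq_Complex cmod_def)

lemma dft_of_real_0: "dft n (of_real \<circ> u) 0 = of_real (vplus n u)"
  by (simp add: dft_def vplus_def unit_root_def)

lemma dft_of_real_half:
  assumes "even n" "n > 0"
  shows "dft n (of_real \<circ> u) (n div 2) = of_real (vminus n u)"
proof -
  have "unit_root n (int (n div 2)) = cis pi"
    using assms by (auto simp: unit_root_def)
  then have "unit_root n (int (n div 2) * int p) = (-1) ^ p" for p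
    by (simp flip: unit_root_power)
  then show ?thesis by (simp add: dft_def vminus_def)
qed

lemma cnj_dft_of_real:
  assumes "n > 0" "k \<le> n"
  shows "cnj (dft n (of_real \<circ> u) k) = dft n (of_real \<circ> u) (n - k)"
proof -
  have "unit_root n (- (int k * int p)) = unit_root n (int (n - k) * int p)" for p
    using assms by (intro unit_root_cong) (simp_all add: of_nat_diff algebra_simps)
  then show ?thesis by (simp add: dft_def cnj_unit_root)
qed

lemma dft_of_real_mult_reflect:
  assumes "n > 0" "k \<le> n"
  shows "dft n (of_real \<circ> u) k * dft n (of_real \<circ> u) (n - k) =
    of_real ((vk n k u)\<^sup>2 + (vtk n k u)\<^sup>2)"
proof -
  have "dft n (of_real \<circ> u) k * dft n (of_real \<circ> u) (n - k) =
      dft n (of_real \<circ> u) k * cnj (dft n (of_real \<circ> u) k)"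
    by (simp add: cnj_dft_of_real assms)
  then show ?thesis by (simp only: complex_mult_cnj dft_of_real_eq_Complex complex.sel)
qed

lemma dft_pmul:
  assumes "n > 0"
  shows "dft n (of_real \<circ> pmul n u1 u2) k = dft n (of_real \<circ> u1) k * dft n (of_real \<circ> u2) k"
proof -
  have root: "unit_root n (int k * int ((j + l) mod n)) =
      unit_root n (int k * int j) * unit_root n (int k * int l)" for j l
  proof -
    have "int n dvd int k * (int (j + l) - int ((j + l) mod n))"
      by (intro dvd_mult) (simp add: of_nat_mod)
    then have "unit_root n (int k * int j + int k * int l) = unit_root n (int k * int ((j + l) mod n))"
      using assms by (intro unit_root_cong) (simp_all add: algebra_simps)
    then show ?thesis by (simp add: unit_root_add)
  qed
  have "dft n (of_real \<circ> pmul n u1 u2) k = (\<Sum>j<n. \<Sum>l<n. \<Sum>m<n.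
      if (j + l) mod n = m then unit_root n (int k * int m) * (of_real (u1 j) * of_real (u2 l)) else 0)"
    unfolding dft_def pmul_def o_def of_real_sum sum_distrib_left
    by (subst sum.swap, rule sum.cong[OF refl], subst sum.swap) (simp add: if_distrib cong: if_cong)
  also have "\<dots> = (\<Sum>j<n. \<Sum>l<n.
      (unit_root n (int k * int j) * of_real (u1 j)) * (unit_root n (int k * int l) * of_real (u2 l)))"
    using assms by (simp add: root mult_ac)
  also have "\<dots> = dft n (of_real \<circ> u1) k * dft n (of_real \<circ> u2) k"
    by (simp add: dft_def sum_product)
  finally show ?thesis .
qed

section \<open>Circulant determinants\<close>

definition circulant :: "nat \<Rightarrow> (nat \<Rightarrow> 'a) \<Rightarrow> 'a mat" where
  "circulant n c = mat n n (\<lambda>(i, j). c ((i + n - j) mod n))"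

definition fourier_mat :: "nat \<Rightarrow> complex mat" where
  "fourier_mat n = mat n n (\<lambda>(j, k). unit_root n (- (int j * int k)))"

lemma det_mat_diag: "det (mat_diag n f) = (\<Prod>i<n. f i)"
  by (subst det_upper_triangular[of _ n])
     (auto simp: upper_triangular_def mat_diag_def prod_list_diag_prod atLeast0LessThan)

lemma cyclic_reflection_involutive:
  fixes i j n :: nat
  assumes "i < n" "j < n"
  shows "(i + n - (i + n - j) mod n) mod n = j"
proof (cases "j \<le> i")
  case True
  then have "(i + n - j) mod n = (i - j + n) mod n"
    by (simp add: add.commute)
  also have "\<dots> = i - j"
    using assms(1) by simp
  finally have "(i + n - j) mod n = i - j" .
  moreover have "i + n - (i - j) = j + n"
    using True by simp
  ultimately show ?thesis using assms by simp
next
  case False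
  then have "(i + n - j) mod n = i + n - j"
    using assms by simp
  moreover have "i + n - (i + n - j) = j"
    using assms by simp
  ultimately show ?thesis using assms by simp
qed

lemma unit_root_cyclic_diff:
  assumes "m < n"
  shows "unit_root n (int ((i + n - m) mod n) * a) = unit_root n ((int i - int m) * a)"
proof -
  have "int ((i + n - m) mod n) = (int i - int m + int n) mod int n"
    using assms by (simp add: of_nat_mod of_nat_diff algebra_simps)
  also have "\<dots> = (int i - int m) mod int n"
    by simp
  finally have "int n dvd int ((i + n - m) mod n) * a - (int i - int m) * a"
    by (simp flip: left_diff_distrib mod_eq_dvd_iff)
  with assms show ?thesis by (intro unit_root_cong) simp_all
qed

lemma circulant_mult_fourier_mat:
  "circulant n c * fourier_mat n = fourier_mat n * mat_diag n (dft n c)"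
proof (rule eq_matI)
  fix i k assume "i < dim_row (fourier_mat n * mat_diag n (dft n c))"
    and "k < dim_col (fourier_mat n * mat_diag n (dft n c))"
  then have i: "i < n" and k: "k < n" by (auto simp: fourier_mat_def mat_diag_def)
  have "(circulant n c * fourier_mat n) $$ (i, k) =
      (\<Sum>j<n. c ((i + n - j) mod n) * unit_root n (- (int j * int k)))"
    using i k by (simp add: circulant_def fourier_mat_def scalar_prod_def atLeast0LessThan)
  also have "\<dots> = (\<Sum>m<n. c m * unit_root n (- (int ((i + n - m) mod n) * int k)))"
    using i
    by (intro sum.reindex_bij_witness[of _ "\<lambda>m. (i + n - m) mod n" "\<lambda>m. (i + n - m) mod n"])
      (simp_all add: cyclic_reflection_involutive)
  also have "\<dots> = (\<Sum>m<n. unit_root n (- (int i * int k)) * (unit_root n (int k * int m) * c m))"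
  proof (rule sum.cong[OF refl])
    fix m assume "m \<in> {..<n}"
    then have "unit_root n (int ((i + n - m) mod n) * - int k) =
        unit_root n ((int i - int m) * - int k)"
      by (intro unit_root_cyclic_diff) simp
    also have "\<dots> = unit_root n (- (int i * int k)) * unit_root n (int k * int m)"
      by (simp flip: unit_root_add add: algebra_simps)
    finally show "c m * unit_root n (- (int ((i + n - m) mod n) * int k)) =
        unit_root n (- (int i * int k)) * (unit_root n (int k * int m) * c m)"
      by simp
  qed
  also have "\<dots> = (fourier_mat n * mat_diag n (dft n c)) $$ (i, k)"
    using i k by (simp add: mat_diag_mult_right[of _ n] fourier_mat_def dft_def sum_distrib_left)
  finally show "(circulant n c * fourier_mat n) $$ (i, k) =
      (fourier_mat n * mat_diag n (dft n c)) $$ (i, k)" .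
qed (auto simp: circulant_def fourier_mat_def mat_diag_def)

lemma fourier_mat_mult_cnj: "fourier_mat n * map_mat cnj (fourier_mat n) = of_nat n \<cdot>\<^sub>m 1\<^sub>m n"
proof (rule eq_matI)
  fix i l assume "i < dim_row (of_nat n \<cdot>\<^sub>m 1\<^sub>m n :: complex mat)"
    and "l < dim_col (of_nat n \<cdot>\<^sub>m 1\<^sub>m n :: complex mat)"
  then have i: "i < n" and l: "l < n" by auto
  have "(fourier_mat n * map_mat cnj (fourier_mat n)) $$ (i, l) =
      (\<Sum>k<n. unit_root n (int l - int i) ^ k)"
    using i l
    by (simp add: fourier_mat_def scalar_prod_def atLeast0LessThan cnj_unit_root unit_root_power
        flip: unit_root_add) (simp add: algebra_simps)
  also have "\<dots> = (if i = l then of_nat n else 0)"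
  proof -
    have "int n dvd int l - int i \<longleftrightarrow> i = l"
      using i l by (auto simp flip: mod_eq_dvd_iff of_nat_mod)
    with i show ?thesis by (simp add: sum_unit_root_powers)
  qed
  finally show "(fourier_mat n * map_mat cnj (fourier_mat n)) $$ (i, l) =
      (of_nat n \<cdot>\<^sub>m 1\<^sub>m n) $$ (i, l)"
    using i l by simp
qed (auto simp: fourier_mat_def)

lemma det_fourier_mat_nonzero: "det (fourier_mat n) \<noteq> 0"
proof -
  have F: "fourier_mat n \<in> carrier_mat n n"
    by (simp add: fourier_mat_def)
  have "det (fourier_mat n) * det (map_mat cnj (fourier_mat n)) = det (of_nat n \<cdot>\<^sub>m 1\<^sub>m n)"
    using F by (simp flip: fourier_mat_mult_cnj add: det_mult[of _ n])
  then show ?thesis by auto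
qed

theorem det_circulant: "det (circulant n c) = (\<Prod>k<n. dft n c k)"
proof -
  have C: "circulant n c \<in> carrier_mat n n" and F: "fourier_mat n \<in> carrier_mat n n"
    by (simp_all add: circulant_def fourier_mat_def)
  have "det (circulant n c) * det (fourier_mat n) =
      det (fourier_mat n) * det (mat_diag n (dft n c))"
    using C F by (simp flip: det_mult[of _ n] add: circulant_mult_fourier_mat)
  then show ?thesis by (simp add: det_fourier_mat_nonzero det_mat_diag)
qed

lemma of_real_nu: "complex_of_real (nu n u) = (\<Prod>k<n. dft n (of_real \<circ> u) k)"
proof -
  have "map_mat complex_of_real (circulant n u) = circulant n (of_real \<circ> u)"
    by (auto simp: circulant_def)
  then show ?thesis
    by (metis det_circulant nu_def circulant_def of_real_hom.hom_det)
qed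

lemma prod_dft_of_real_pairs:
  assumes "2 * h < n"
  shows "(\<Prod>k\<in>{1..h}. dft n (of_real \<circ> u) k) *
      (\<Prod>k\<in>{n-h..n-1}. dft n (of_real \<circ> u) k) =
    of_real (\<Prod>k\<in>{1..h}. (vk n k u)\<^sup>2 + (vtk n k u)\<^sup>2)"
proof -
  have "(\<Prod>k\<in>{n-h..n-1}. dft n (of_real \<circ> u) k) =
      (\<Prod>k\<in>{1..h}. dft n (of_real \<circ> u) (n - k))"
    using assms by (intro prod.reindex_bij_witness[of _ "\<lambda>k. n - k" "\<lambda>k. n - k"]) auto
  then have "(\<Prod>k\<in>{1..h}. dft n (of_real \<circ> u) k) *
      (\<Prod>k\<in>{n-h..n-1}. dft n (of_real \<circ> u) k) =
      (\<Prod>k\<in>{1..h}. dft n (of_real \<circ> u) k * dft n (of_real \<circ> u) (n - k))"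
    by (simp add: prod.distrib)
  also have "\<dots> = (\<Prod>k\<in>{1..h}. of_real ((vk n k u)\<^sup>2 + (vtk n k u)\<^sup>2))"
    using assms by (intro prod.cong refl dft_of_real_mult_reflect) auto
  finally show ?thesis
    by simp
qed

lemma nu_odd_factorization:
  assumes "odd n"
  shows "nu n u = vplus n u * (\<Prod>k\<in>{1..(n - 1) div 2}. (vk n k u)\<^sup>2 + (vtk n k u)\<^sup>2)"
proof -
  define h where "h = (n - 1) div 2"
  have n: "n = 2 * h + 1"
    using assms unfolding h_def by presburger
  then have split: "{..<n} = insert 0 ({1..h} \<union> {n-h..n-1})" and pairs: "2 * h < n"
    by auto
  have "complex_of_real (nu n u) = (\<Prod>k<n. dft n (of_real \<circ> u) k)"
    by (rule of_real_nu)
  also have "\<dots> = dft n (of_real \<circ> u) 0 *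
      ((\<Prod>k\<in>{1..h}. dft n (of_real \<circ> u) k) * (\<Prod>k\<in>{n-h..n-1}. dft n (of_real \<circ> u) k))"
    unfolding split using n by (subst prod.insert) (auto simp: prod.union_disjoint)
  also have "\<dots> = of_real (vplus n u * (\<Prod>k\<in>{1..h}. (vk n k u)\<^sup>2 + (vtk n k u)\<^sup>2))"
    by (simp only: prod_dft_of_real_pairs[OF pairs] dft_of_real_0 of_real_mult)
  finally show ?thesis
    unfolding h_def of_real_eq_iff .
qed

lemma nu_even_factorization:
  assumes "even n" "n > 0"
  shows "nu n u =
    vplus n u * vminus n u * (\<Prod>k\<in>{1..n div 2 - 1}. (vk n k u)\<^sup>2 + (vtk n k u)\<^sup>2)"
proof -
  define h where "h = n div 2 - 1"
  have n: "n = 2 * h + 2"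
    using assms unfolding h_def by presburger
  then have split: "{..<n} = insert 0 (insert (n div 2) ({1..h} \<union> {n-h..n-1}))"
    and pairs: "2 * h < n"
    by auto
  have "complex_of_real (nu n u) = (\<Prod>k<n. dft n (of_real \<circ> u) k)"
    by (rule of_real_nu)
  also have "\<dots> = dft n (of_real \<circ> u) 0 * (dft n (of_real \<circ> u) (n div 2) *
      ((\<Prod>k\<in>{1..h}. dft n (of_real \<circ> u) k) * (\<Prod>k\<in>{n-h..n-1}. dft n (of_real \<circ> u) k)))"
    unfolding split using n
    by (subst prod.insert, simp, simp, subst prod.insert) (auto simp: prod.union_disjoint)
  also have "\<dots> = of_real (vplus n u * vminus n u * (\<Prod>k\<in>{1..h}. (vk n k u)\<^sup>2 + (vtk n k u)\<^sup>2))"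
    by (simp only: prod_dft_of_real_pairs[OF pairs] dft_of_real_0 dft_of_real_half[OF assms]
        of_real_mult mult.assoc)
  finally show ?thesis
    unfolding h_def of_real_eq_iff .
qed

section \<open>Multiplicativity of the canonical variables\<close>

lemma vk_pmul:
  assumes "n > 0"
  shows "vk n k (pmul n u1 u2) = vk n k u1 * vk n k u2 - vtk n k u1 * vtk n k u2"
  using dft_pmul[OF assms, of u1 u2 k] by (simp add: dft_of_real_eq_Complex complex_eq_iff)

lemma vtk_pmul:
  assumes "n > 0"
  shows "vtk n k (pmul n u1 u2) = vk n k u1 * vtk n k u2 + vtk n k u1 * vk n k u2"
  using dft_pmul[OF assms, of u1 u2 k] by (simp add: dft_of_real_eq_Complex complex_eq_iff)

lemma rhok_pmul:
  assumes "n > 0"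
  shows "rhok n k (pmul n u1 u2) = rhok n k u1 * rhok n k u2"
  by (simp add: rhok_eq_norm_dft dft_pmul[OF assms] norm_mult)

lemma vplus_pmul:
  assumes "n > 0"
  shows "vplus n (pmul n u1 u2) = vplus n u1 * vplus n u2"
  using dft_pmul[OF assms, of u1 u2 0] by (simp add: dft_of_real_0 flip: of_real_mult)

lemma vminus_pmul:
  assumes "even n" "n > 0"
  shows "vminus n (pmul n u1 u2) = vminus n u1 * vminus n u2"
  using dft_pmul[OF assms(2), of u1 u2 "n div 2"]
  by (simp add: dft_of_real_half[OF assms] flip: of_real_mult)

lemma nu_pmul:
  assumes "n > 0"
  shows "nu n (pmul n u1 u2) = nu n u1 * nu n u2"
proof -
  have "complex_of_real (nu n (pmul n u1 u2)) = complex_of_real (nu n u1 * nu n u2)"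
    by (simp add: of_real_nu dft_pmul[OF assms] prod.distrib)
  then show ?thesis
    by (simp only: of_real_eq_iff)
qed

lemma amplitude_pmul:
  assumes "n > 0"
  shows "amplitude n (pmul n u1 u2) = amplitude n u1 * amplitude n u2"
  by (simp add: amplitude_def nu_pmul[OF assms] real_root_mult)

lemma tan_theta_plus_pmul:
  assumes "n > 0" "vplus n u1 \<noteq> 0" "vplus n u2 \<noteq> 0"
  shows "tan_theta_plus n (pmul n u1 u2) = tan_theta_plus n u1 * tan_theta_plus n u2 / sqrt 2"
  using assms by (simp add: tan_theta_plus_def rhok_pmul vplus_pmul field_simps)

lemma tan_theta_minus_pmul:
  assumes "even n" "n > 0" "vminus n u1 \<noteq> 0" "vminus n u2 \<noteq> 0"
  shows "tan_theta_minus n (pmul n u1 u2) = tan_theta_minus n u1 * tan_theta_minus n u2 / sqrt 2"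
  using assms by (simp add: tan_theta_minus_def rhok_pmul vminus_pmul field_simps)

lemma tan_psi_pmul:
  assumes "n > 0"
  shows "tan_psi n k (pmul n u1 u2) = tan_psi n k u1 * tan_psi n k u2"
  by (simp add: tan_psi_def rhok_pmul[OF assms])

lemma ex1_angle_in_2pi:
  fixes c s :: real
  assumes "c\<^sup>2 + s\<^sup>2 = 1"
  shows "\<exists>!\<phi>. 0 \<le> \<phi> \<and> \<phi> < 2 * pi \<and> cos \<phi> = c \<and> sin \<phi> = s"
proof (rule ex_ex1I)
  show "\<exists>\<phi>. 0 \<le> \<phi> \<and> \<phi> < 2 * pi \<and> cos \<phi> = c \<and> sin \<phi> = s"
    using sincos_total_2pi[OF assms] by metis
next
  fix \<phi> \<psi>
  assume \<phi>: "0 \<le> \<phi> \<and> \<phi> < 2 * pi \<and> cos \<phi> = c \<and> sin \<phi> = s"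
    and \<psi>: "0 \<le> \<psi> \<and> \<psi> < 2 * pi \<and> cos \<psi> = c \<and> sin \<psi> = s"
  then obtain m :: int where m: "\<phi> = \<psi> + 2 * pi * m"
    using sin_cos_eq_iff by metis
  with \<phi> \<psi>
  have "2 * pi * real_of_int m < 2 * pi * 1" "2 * pi * (- 1) < 2 * pi * real_of_int m"
    by linarith+
  then have "real_of_int m < 1" "- 1 < real_of_int m"
    by (simp_all only: mult_less_cancel_left_pos pi_gt_zero zero_less_numeral mult_pos_pos)
  then have "m = 0"
    by linarith
  with m show "\<phi> = \<psi>"
    by simp
qed

lemma cis_phik:
  assumes "0 < rhok n k u"
  shows "cis (phik n k u) = dft n (of_real \<circ> u) k / of_real (rhok n k u)"
proof -
  let ?c = "vk n k u / rhok n k u" and ?s = "vtk n k u / rhok n k u"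
  have "(vk n k u)\<^sup>2 + (vtk n k u)\<^sup>2 = (rhok n k u)\<^sup>2"
    by (simp add: rhok_def)
  then have "?c\<^sup>2 + ?s\<^sup>2 = (rhok n k u)\<^sup>2 / (rhok n k u)\<^sup>2"
    by (simp add: power_divide flip: add_divide_distrib)
  also have "\<dots> = 1"
    using assms by simp
  finally have
    "0 \<le> phik n k u \<and> phik n k u < 2 * pi \<and> cos (phik n k u) = ?c \<and> sin (phik n k u) = ?s"
    unfolding phik_def by (rule theI'[OF ex1_angle_in_2pi])
  then show ?thesis
    by (simp add: complex_eq_iff dft_of_real_eq_Complex Re_divide_of_real Im_divide_of_real)
qed

lemma phik_pmul:
  assumes "n > 0" "0 < rhok n k u1" "0 < rhok n k u2"
  shows "\<exists>m::int. phik n k (pmul n u1 u2) = phik n k u1 + phik n k u2 + 2 * pi * m"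
proof -
  have "0 < rhok n k (pmul n u1 u2)"
    using assms by (simp add: rhok_pmul)
  then have "cis (phik n k (pmul n u1 u2)) = cis (phik n k u1) * cis (phik n k u2)"
    using assms by (simp add: cis_phik dft_pmul rhok_pmul)
  then have "cis (phik n k (pmul n u1 u2)) = cis (phik n k u1 + phik n k u2)"
    by (simp add: cis_mult)
  then have "sin (phik n k (pmul n u1 u2)) = sin (phik n k u1 + phik n k u2) \<and>
      cos (phik n k (pmul n u1 u2)) = cos (phik n k u1 + phik n k u2)"
    by (metis cis.sel)
  then show ?thesis
    by (simp only: sin_cos_eq_iff add.assoc)
qed

theorem mainTheorem7:
  fixes n :: nat and u u1 u2 :: "nat \<Rightarrow> real"
  assumes "2 \<le> n"
  shows
    "complex_of_real (nu n u) =
       (\<Prod>k<n. \<Sum>p<n. cis (2 * pi * real k / real n) ^ p * complex_of_real (u p))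
     \<and> (even n \<longrightarrow> nu n u = vplus n u * vminus n u *
          (\<Prod>k\<in>{1..n div 2 - 1}. (vk n k u)\<^sup>2 + (vtk n k u)\<^sup>2))
     \<and> (odd n \<longrightarrow> nu n u = vplus n u *
          (\<Prod>k\<in>{1..(n - 1) div 2}. (vk n k u)\<^sup>2 + (vtk n k u)\<^sup>2))
     \<and> vplus n (pmul n u1 u2) = vplus n u1 * vplus n u2
     \<and> (even n \<longrightarrow> vminus n (pmul n u1 u2) = vminus n u1 * vminus n u2)
     \<and> (\<forall>k. 1 \<le> k \<and> k \<le> (n - 1) div 2 \<longrightarrow>
          vk n k (pmul n u1 u2) = vk n k u1 * vk n k u2 - vtk n k u1 * vtk n k u2
        \<and> vtk n k (pmul n u1 u2) = vk n k u1 * vtk n k u2 + vtk n k u1 * vk n k u2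
        \<and> rhok n k (pmul n u1 u2) = rhok n k u1 * rhok n k u2
        \<and> (0 < rhok n k u1 \<and> 0 < rhok n k u2 \<longrightarrow>
             (\<exists>m::int. phik n k (pmul n u1 u2) = phik n k u1 + phik n k u2 + 2 * pi * m)))
     \<and> nu n (pmul n u1 u2) = nu n u1 * nu n u2
     \<and> (0 < nu n u1 \<and> 0 < nu n u2 \<longrightarrow>
          amplitude n (pmul n u1 u2) = amplitude n u1 * amplitude n u2)
     \<and> (3 \<le> n \<and> vplus n u1 \<noteq> 0 \<and> vplus n u2 \<noteq> 0 \<longrightarrow>
          tan_theta_plus n (pmul n u1 u2) = tan_theta_plus n u1 * tan_theta_plus n u2 / sqrt 2)
     \<and> (3 \<le> n \<and> even n \<and> vminus n u1 \<noteq> 0 \<and> vminus n u2 \<noteq> 0 \<longrightarrow>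
          tan_theta_minus n (pmul n u1 u2) = tan_theta_minus n u1 * tan_theta_minus n u2 / sqrt 2)
     \<and> (\<forall>k. 2 \<le> k \<and> k \<le> (n - 1) div 2 \<and> 0 < rhok n k u1 \<and> 0 < rhok n k u2 \<longrightarrow>
          tan_psi n k (pmul n u1 u2) = tan_psi n k u1 * tan_psi n k u2)"
proof -
  have n: "n > 0"
    using assms by simp
  have "complex_of_real (nu n u) =
      (\<Prod>k<n. \<Sum>p<n. cis (2 * pi * real k / real n) ^ p * complex_of_real (u p))"
    by (simp add: of_real_nu dft_def cis_power_eq_unit_root)
  with n show ?thesis
    by (intro conjI impI allI)
      (simp_all add: nu_even_factorization nu_odd_factorization vplus_pmul vminus_pmul vk_pmul
        vtk_pmul rhok_pmul phik_pmul nu_pmul amplitude_pmul tan_theta_plus_pmul tan_theta_minus_pmul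
        tan_psi_pmul)
qed

end
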